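(* Let $L:\mathbb{R}^n\to\mathbb{R}$ be $\mathcal{C}^1$, convex, with a unique minimizer $z_1^*$ ($L^*=L(z_1^* )$), and with $\nabla L$ Lipschitz with constant $M>0$. Let $\zeta>0$, $\bar d(t)=\frac{3}{2(t+2)}$, $\bar\beta(t)=\frac{t-1}{t+2}$. Then for every $\varepsilon>0$ and every compact set $K\subset\mathbb{R}^{2n}$ there exists $t^*>0$ such that every maximal solution $t\mapsto(z(t),\tau(t))$ of $\dot z_1=z_2$, $\dot z_2=-2\bar d(\tau)z_2-\frac{\zeta^2}{M}\nabla L(z_1+\bar\beta(\tau)z_2)$, $\dot\tau=1$ on $\mathbb{R}^{2n}\times\mathbb{R}_{\ge0}$ with $(z(0),\tau(0))\in K\times\{0\}$ satisfies $$\frac{\zeta^2}{M}(L(z_1(t))-L^* )\le\varepsilon\quad\text{for all }t\ge t^*.$$ *)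

theory Defs
  imports "HOL-Analysis.Analysis"
begin

definition dbar :: "real \<Rightarrow> real" where
  "dbar t = 3 / (2 * (t + 2))"

definition betabar :: "real \<Rightarrow> real" where
  "betabar t = (t - 1) / (t + 2)"

definition is_solution ::
  "real \<Rightarrow> real \<Rightarrow> (real^'n \<Rightarrow> real^'n) \<Rightarrow> real set
   \<Rightarrow> (real \<Rightarrow> real^'n) \<Rightarrow> (real \<Rightarrow> real^'n) \<Rightarrow> (real \<Rightarrow> real) \<Rightarrow> bool" where
  "is_solution zeta M gradL J z1 z2 tau \<longleftrightarrow>
     is_interval J \<and> 0 \<in> J \<and>
     (\<forall>t\<in>J. tau t \<ge> 0 \<and>
        (z1 has_vector_derivative z2 t) (at t within J) \<and>
        (z2 has_vector_derivative
           (- (2 * dbar (tau t)) *\<^sub>R z2 t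
            - (zeta\<^sup>2 / M) *\<^sub>R gradL (z1 t + betabar (tau t) *\<^sub>R z2 t))) (at t within J) \<and>
        (tau has_vector_derivative 1) (at t within J))"

definition is_maximal_solution ::
  "real \<Rightarrow> real \<Rightarrow> (real^'n \<Rightarrow> real^'n) \<Rightarrow> real set
   \<Rightarrow> (real \<Rightarrow> real^'n) \<Rightarrow> (real \<Rightarrow> real^'n) \<Rightarrow> (real \<Rightarrow> real) \<Rightarrow> bool" where
  "is_maximal_solution zeta M gradL J z1 z2 tau \<longleftrightarrow>
     is_solution zeta M gradL J z1 z2 tau \<and>
     (\<forall>J' w1 w2 s. is_solution zeta M gradL J' w1 w2 s \<and> J \<subseteq> J' \<and>
        (\<forall>t\<in>J. w1 t = z1 t \<and> w2 t = z2 t \<and> s t = tau t) \<longrightarrow> J' = J)"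

end

theory Submission
  imports Defs
begin

text \<open>
  Along a solution the clock tau is the identity, and the vector field evaluates the gradient at
  the extrapolated point y = z1 + betabar t z2. With s = t + 2, the Lyapunov function
  E = c (s^2/4 + s) (L y - L zstar) + q_s(z1 - zstar, z2), where q_s is a quadratic form
  dominating s/10 |z2|^2, has derivative at most -c^2 (s^2/4 + s) betabar t |gradL y|^2 along the
  flow: all other terms are nonpositive, one of them by convexity of L. For t \<ge> 1 we have
  betabar t \<ge> 0, so E decreases; on [0, 1] we only have betabar t \<ge> -1/2, and
  |gradL y|^2 \<le> 2 M (L y - L zstar) gives E' \<le> c M E. Hence E t \<le> exp (c M) E 0 for t \<ge> 1.
  Since E dominates s^2 (L y - L zstar) and s |z2|^2, and z1 = y - betabar t z2, the descent
  lemma gives c (L z1 - L zstar) = O(E 0 / s), and E 0 is bounded on the compact set of initial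
  data.
\<close>

section \<open>Smooth convex functions\<close>

lemma lipschitz_gradient_upper_bound:
  fixes L :: "'a::real_inner \<Rightarrow> real" and gradL :: "'a \<Rightarrow> 'a"
  assumes grad: "\<And>x. (L has_derivative (\<lambda>h. gradL x \<bullet> h)) (at x)"
    and lip: "\<And>x y. norm (gradL x - gradL y) \<le> M * norm (x - y)"
  shows "L (x + h) \<le> L x + gradL x \<bullet> h + M / 2 * (h \<bullet> h)"
proof -
  define \<phi> where
    "\<phi> \<theta> = L (x + \<theta> *\<^sub>R h) - \<theta> * (gradL x \<bullet> h) - M / 2 * \<theta>\<^sup>2 * (h \<bullet> h)" for \<theta>
  define \<phi>' where
    "\<phi>' \<theta> = (gradL (x + \<theta> *\<^sub>R h) - gradL x) \<bullet> h - M * \<theta> * (h \<bullet> h)" for \<theta>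
  have deriv: "(\<phi> has_real_derivative \<phi>' \<theta>) (at \<theta>)" for \<theta>
  proof -
    have "((\<lambda>\<theta>. L (x + \<theta> *\<^sub>R h)) has_derivative
        (\<lambda>k. gradL (x + \<theta> *\<^sub>R h) \<bullet> (k *\<^sub>R h))) (at \<theta>)"
      by (rule has_derivative_compose[OF _ grad]) (auto intro!: derivative_eq_intros)
    then show ?thesis
      unfolding \<phi>_def \<phi>'_def has_field_derivative_def
      by (auto intro!: derivative_eq_intros simp: algebra_simps power2_eq_square)
  qed
  have "\<phi>' \<theta> \<le> 0" if "\<theta> \<ge> 0" for \<theta>
  proof -
    have "(gradL (x + \<theta> *\<^sub>R h) - gradL x) \<bullet> h
        \<le> norm (gradL (x + \<theta> *\<^sub>R h) - gradL x) * norm h"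
      by (rule norm_cauchy_schwarz)
    also have "\<dots> \<le> M * norm (\<theta> *\<^sub>R h) * norm h"
      using lip[of "x + \<theta> *\<^sub>R h" x] by (intro mult_right_mono) auto
    also have "\<dots> = M * \<theta> * (h \<bullet> h)"
      using that by (simp add: power2_norm_eq_inner[symmetric] power2_eq_square)
    finally show ?thesis by (simp add: \<phi>'_def)
  qed
  then have "\<phi> 1 \<le> \<phi> 0"
    using deriv DERIV_isCont
    by (intro DERIV_nonpos_imp_decreasing_open[of 0 1] continuous_at_imp_continuous_on) fastforce+
  then show ?thesis by (simp add: \<phi>_def)
qed

lemma convex_gradient_inequality:
  fixes L :: "'a::real_inner \<Rightarrow> real" and gradL :: "'a \<Rightarrow> 'a"
  assumes grad: "\<And>x. (L has_derivative (\<lambda>h. gradL x \<bullet> h)) (at x)"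
    and conv: "convex_on UNIV L"
  shows "L x + gradL x \<bullet> (y - x) \<le> L y"
proof -
  define \<phi> where "\<phi> \<theta> = L (x + \<theta> *\<^sub>R (y - x))" for \<theta>
  have "((\<lambda>\<theta>. L (x + \<theta> *\<^sub>R (y - x))) has_derivative
          (\<lambda>k. gradL (x + 0 *\<^sub>R (y - x)) \<bullet> (k *\<^sub>R (y - x)))) (at 0)"
    by (rule has_derivative_compose[OF _ grad]) (auto intro!: derivative_eq_intros)
  then have deriv: "(\<phi> has_real_derivative gradL x \<bullet> (y - x)) (at 0)"
    unfolding \<phi>_def has_field_derivative_def
    by (rule has_derivative_eq_rhs) (auto simp: fun_eq_iff algebra_simps)
  have "convex_on UNIV \<phi>"
  proof (rule convex_onI)
    fix t a b :: real assume "0 < t" "t < 1"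
    have "\<phi> ((1 - t) *\<^sub>R a + t *\<^sub>R b)
        = L ((1 - t) *\<^sub>R (x + a *\<^sub>R (y - x)) + t *\<^sub>R (x + b *\<^sub>R (y - x)))"
      by (simp add: \<phi>_def algebra_simps)
    also have "\<dots> \<le> (1 - t) * \<phi> a + t * \<phi> b"
      using convex_onD[OF conv] \<open>0 < t\<close> \<open>t < 1\<close> by (simp add: \<phi>_def)
    finally show "\<phi> ((1 - t) *\<^sub>R a + t *\<^sub>R b) \<le> (1 - t) * \<phi> a + t * \<phi> b" .
  qed simp
  then have "\<phi> 1 - \<phi> 0 \<ge> gradL x \<bullet> (y - x) * (1 - 0)"
    by (rule convex_on_imp_above_tangent) (auto intro: has_field_derivative_at_within[OF deriv])
  then show ?thesis by (simp add: \<phi>_def)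
qed

lemma gradient_norm_le_suboptimality:
  fixes L :: "'a::real_inner \<Rightarrow> real" and gradL :: "'a \<Rightarrow> 'a"
  assumes grad: "\<And>x. (L has_derivative (\<lambda>h. gradL x \<bullet> h)) (at x)"
    and lip: "\<And>x y. norm (gradL x - gradL y) \<le> M * norm (x - y)"
    and "M > 0" and "\<And>y. L zstar \<le> L y"
  shows "gradL x \<bullet> gradL x \<le> 2 * M * (L x - L zstar)"
proof -
  \<comment> \<open>one gradient step of length 1/M decreases L by at least |gradL x|^2/(2M)\<close>
  have "L zstar \<le> L (x + (- 1 / M) *\<^sub>R gradL x)" by fact
  also have "\<dots> \<le> L x + gradL x \<bullet> ((- 1 / M) *\<^sub>R gradL x)
      + M / 2 * (((- 1 / M) *\<^sub>R gradL x) \<bullet> ((- 1 / M) *\<^sub>R gradL x))"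
    by (rule lipschitz_gradient_upper_bound[OF grad lip])
  also have "\<dots> = L x - (gradL x \<bullet> gradL x) / (2 * M)"
    using \<open>M > 0\<close> by (simp add: field_simps power2_eq_square)
  finally show ?thesis using \<open>M > 0\<close> by (simp add: field_simps)
qed

section \<open>Differential inequalities on an interval\<close>

lemma DERIV_nonpos_imp_decreasing_within:
  fixes f f' :: "real \<Rightarrow> real"
  assumes "a \<le> b"
    and "\<And>x. x \<in> {a..b} \<Longrightarrow> (f has_real_derivative f' x) (at x within {a..b})"
    and "\<And>x. x \<in> {a..b} \<Longrightarrow> f' x \<le> 0"
  shows "f b \<le> f a"
proof -
  obtain x where x: "x \<in> {a..b}" and mvt: "f b - f a = f' x * (b - a)"
    using mvt_very_simple[OF \<open>a \<le> b\<close>, where f = f and f' = "\<lambda>x h. f' x * h"] assms(2)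
    by (auto simp: has_field_derivative_def)
  have "f' x * (b - a) \<le> 0"
    using assms(1) assms(3)[OF x] by (intro mult_nonpos_nonneg) auto
  with mvt show ?thesis by simp
qed

lemma DERIV_le_linear_imp_exp_bound:
  fixes f f' :: "real \<Rightarrow> real"
  assumes "a \<le> b"
    and deriv: "\<And>x. x \<in> {a..b} \<Longrightarrow> (f has_real_derivative f' x) (at x within {a..b})"
    and growth: "\<And>x. x \<in> {a..b} \<Longrightarrow> f' x \<le> k * f x"
  shows "f b \<le> exp (k * (b - a)) * f a"
proof -
  have "exp (- k * b) * f b \<le> exp (- k * a) * f a"
  proof (rule DERIV_nonpos_imp_decreasing_within[OF \<open>a \<le> b\<close>])
    fix x assume x: "x \<in> {a..b}"
    show "((\<lambda>x. exp (- k * x) * f x) has_real_derivative exp (- k * x) * (f' x - k * f x))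
        (at x within {a..b})"
      by (rule derivative_eq_intros deriv[OF x] refl)+ (simp add: algebra_simps)
    show "exp (- k * x) * (f' x - k * f x) \<le> 0"
      using growth[OF x] by (simp add: mult_nonneg_nonpos)
  qed
  from mult_left_mono[OF this, of "exp (k * b)"] show ?thesis
    by (simp add: mult.assoc[symmetric] exp_add[symmetric] right_diff_distrib)
qed

section \<open>The Lyapunov function\<close>

definition gap_weight :: "real \<Rightarrow> real \<Rightarrow> real" where
  "gap_weight c s = c * s * (s + 4) / 4"

definition energy_form :: "real \<Rightarrow> 'a::real_inner \<Rightarrow> 'a \<Rightarrow> real" where
  "energy_form s p v = (s + 3) / (2 * s) * (p \<bullet> p) + (s + 2) / 2 * (p \<bullet> v)
     + (s\<^sup>2 / 8 + 3 * s / 8 - 1 / 4 + 9 / (2 * s)) * (v \<bullet> v)"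

definition energy ::
    "('a::real_inner \<Rightarrow> real) \<Rightarrow> 'a \<Rightarrow> real \<Rightarrow> real \<Rightarrow> 'a \<Rightarrow> 'a \<Rightarrow> real" where
  "energy L zstar c t z v =
     gap_weight c (t + 2) * (L (z + betabar t *\<^sub>R v) - L zstar) + energy_form (t + 2) (z - zstar) v"

lemma energy_form_ge:
  fixes p v :: "'a::real_inner"
  assumes s: "s \<ge> 2"
  shows "s / 10 * (v \<bullet> v) \<le> energy_form s p v"
proof -
  define w where "w = (s + 3) *\<^sub>R p + (s * (s + 2) / 2) *\<^sub>R v"
  define K where "K = s ^ 3 / 2 + 3 * s\<^sup>2 / 4 + 15 * s / 2 + 27"
  \<comment> \<open>completing the square in p\<close>
  have "2 * s * (s + 3) * energy_form s p v = w \<bullet> w + K * (v \<bullet> v)"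
    using s unfolding energy_form_def w_def K_def
    by (simp add: inner_add_left inner_add_right inner_commute field_simps power2_eq_square power3_eq_cube)
  also have "\<dots> \<ge> 2 * s * (s + 3) * (s / 10 * (v \<bullet> v))"
  proof -
    have "2 * s * (s + 3) * (s / 10) \<le> K"
      using s unfolding K_def by (simp add: field_simps power2_eq_square power3_eq_cube)
    then have "2 * s * (s + 3) * (s / 10) * (v \<bullet> v) \<le> K * (v \<bullet> v)"
      by (rule mult_right_mono) simp
    then show ?thesis using inner_ge_zero[of w] by linarith
  qed
  finally show ?thesis using s by simp
qed

locale smooth_convex_objective =
  fixes L :: "'a::real_inner \<Rightarrow> real" and gradL :: "'a \<Rightarrow> 'a" and M :: real and zstar :: 'a
  assumes has_derivative_L: "\<And>x. (L has_derivative (\<lambda>h. gradL x \<bullet> h)) (at x)"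
    and convex_L: "convex_on UNIV L"
    and minimal: "\<And>y. L zstar \<le> L y"
    and M_pos: "M > 0"
    and lipschitz_gradL: "\<And>x y. norm (gradL x - gradL y) \<le> M * norm (x - y)"
begin

lemma energy_ge:
  assumes "c \<ge> 0" and "t \<ge> 0"
  shows "gap_weight c (t + 2) * (L (x + betabar t *\<^sub>R w) - L zstar) + (t + 2) / 10 * (w \<bullet> w)
    \<le> energy L zstar c t x w"
  using energy_form_ge[of "t + 2" w "x - zstar"] \<open>t \<ge> 0\<close> by (simp add: energy_def)

lemma suboptimality_le_shifted:
  assumes "\<bar>\<beta>\<bar> \<le> 1" and "s > 0"
  shows "L x - L zstar
    \<le> (1 + M * s) * (L (x + \<beta> *\<^sub>R w) - L zstar) + (1 / (2 * s) + M / 2) * (w \<bullet> w)"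
proof -
  define y where "y = x + \<beta> *\<^sub>R w"
  define N where "N = gradL y \<bullet> gradL y"
  have \<beta>2: "\<beta>\<^sup>2 * (w \<bullet> w) \<le> w \<bullet> w"
    using assms(1) by (simp add: mult_left_le_one_le abs_square_le_1)
  have "L x \<le> L y + gradL y \<bullet> (- \<beta> *\<^sub>R w) + M / 2 * ((- \<beta> *\<^sub>R w) \<bullet> (- \<beta> *\<^sub>R w))"
    using lipschitz_gradient_upper_bound[OF has_derivative_L lipschitz_gradL, of y "- \<beta> *\<^sub>R w"]
    by (simp add: y_def)
  also have "\<dots> \<le> L y + (s * N + (w \<bullet> w) / s) / 2 + M / 2 * (w \<bullet> w)"
  proof -
    \<comment> \<open>AM-GM for the cross term, in the form 0 \<le> |s gradL y + \<beta> w|^2\<close>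
    have "0 \<le> (s *\<^sub>R gradL y + \<beta> *\<^sub>R w) \<bullet> (s *\<^sub>R gradL y + \<beta> *\<^sub>R w)"
      by simp
    then have "- (2 * s * \<beta> * (gradL y \<bullet> w)) \<le> s\<^sup>2 * N + \<beta>\<^sup>2 * (w \<bullet> w)"
      by (simp add: N_def inner_add_left inner_add_right inner_commute algebra_simps power2_eq_square)
    with \<beta>2 have "gradL y \<bullet> (- \<beta> *\<^sub>R w) \<le> (s * N + (w \<bullet> w) / s) / 2"
      using assms(2) by (simp add: field_simps power2_eq_square)
    moreover have "M / 2 * ((- \<beta> *\<^sub>R w) \<bullet> (- \<beta> *\<^sub>R w)) \<le> M / 2 * (w \<bullet> w)"
      using \<beta>2 M_pos by (simp add: power2_eq_square)
    ultimately show ?thesis by linarith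
  qed
  also have "\<dots> \<le> L y + (s * (2 * M * (L y - L zstar)) + (w \<bullet> w) / s) / 2 + M / 2 * (w \<bullet> w)"
    using gradient_norm_le_suboptimality[OF has_derivative_L lipschitz_gradL M_pos minimal, of y]
      assms(2) by (simp add: N_def)
  finally show ?thesis
    using assms(2) by (simp add: y_def field_simps)
qed

lemma suboptimality_le_energy:
  assumes "c > 0" and "t \<ge> 1"
  shows "c * (L x - L zstar) \<le> (4 + 4 * M + 5 * c + 5 * c * M) * energy L zstar c t x w / (t + 2)"
proof -
  define s where "s = t + 2"
  define F where "F = L (x + betabar t *\<^sub>R w) - L zstar"
  define U where "U = w \<bullet> w"
  define E where "E = energy L zstar c t x w"
  have s: "s \<ge> 3" using assms by (simp add: s_def)
  have F: "F \<ge> 0" and U: "U \<ge> 0" using minimal by (simp_all add: F_def U_def)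
  have "c * s\<^sup>2 / 4 * F \<le> gap_weight c s * F"
    using assms F by (intro mult_right_mono) (simp_all add: gap_weight_def s_def field_simps power2_eq_square)
  then have E_ge: "c * s\<^sup>2 / 4 * F + s / 10 * U \<le> E"
    using energy_ge[of c t x w] assms by (simp add: E_def F_def U_def s_def)
  have "0 \<le> c * s\<^sup>2 / 4 * F" and "0 \<le> s / 10 * U" using F U s \<open>c > 0\<close> by simp_all
  then have EF: "c * s\<^sup>2 * F \<le> 4 * E" and EU: "s * U \<le> 10 * E" using E_ge
    by (simp_all add: field_simps)
  have "\<bar>betabar t\<bar> \<le> 1" using assms by (simp add: betabar_def)
  from suboptimality_le_shifted[OF this, of s x w] s
  have "s * (c * (L x - L zstar)) \<le> s * (c * ((1 + M * s) * F + (1 / (2 * s) + M / 2) * U))"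
    using \<open>c > 0\<close> by (simp add: F_def U_def)
  also have "\<dots> = c * s * F + M * (c * s\<^sup>2 * F) + c / 2 * U + c * M / 2 * (s * U)"
    using s by (simp add: field_simps power2_eq_square)
  also have "\<dots> \<le> 4 * E + M * (4 * E) + c / 2 * (10 * E) + c * M / 2 * (10 * E)"
  proof -
    have "c * s * F \<le> c * s\<^sup>2 * F"
      using s F \<open>c > 0\<close> by (simp add: power2_eq_square mult_right_mono)
    moreover have "U \<le> s * U" using s U by (simp add: mult_right_mono[of 1 s U, simplified])
    moreover have "M * (c * s\<^sup>2 * F) \<le> M * (4 * E)" using EF M_pos by simp
    moreover have "c * M / 2 * (s * U) \<le> c * M / 2 * (10 * E)" using EU M_pos \<open>c > 0\<close> by simp
    moreover have "c / 2 * U \<le> c / 2 * (10 * E)" using \<open>U \<le> s * U\<close> EU \<open>c > 0\<close> by simp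
    ultimately show ?thesis using EF by linarith
  qed
  finally show ?thesis using s by (simp add: E_def s_def field_simps)
qed

end

section \<open>Decay of the Lyapunov function along the flow\<close>

lemma has_real_derivative_inner:
  fixes f g :: "real \<Rightarrow> 'a::real_inner"
  assumes "(f has_vector_derivative f') (at t within S)" and "(g has_vector_derivative g') (at t within S)"
  shows "((\<lambda>t. f t \<bullet> g t) has_real_derivative f' \<bullet> g t + f t \<bullet> g') (at t within S)"
  using has_derivative_inner[OF assms[unfolded has_vector_derivative_def]]
  unfolding has_field_derivative_def
  by (rule has_derivative_eq_rhs) (simp add: fun_eq_iff algebra_simps)

lemma energy_weights_has_derivative:
  fixes t :: real
  assumes "t + 2 > 0"
  shows "((\<lambda>t. gap_weight c (t + 2)) has_real_derivative c * (t + 4) / 2) (at t within S)"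
    and "((\<lambda>t. (t + 2 + 3) / (2 * (t + 2))) has_real_derivative - 3 / (2 * (t + 2)\<^sup>2)) (at t within S)"
    and "((\<lambda>t. (t + 2)\<^sup>2 / 8 + 3 * (t + 2) / 8 - 1 / 4 + 9 / (2 * (t + 2))) has_real_derivative
          (t + 2) / 4 + 3 / 8 - 9 / (2 * (t + 2)\<^sup>2)) (at t within S)"
    and "(betabar has_real_derivative 3 / (t + 2)\<^sup>2) (at t within S)"
proof -
  have shift: "((\<lambda>t. f (t + 2)) has_real_derivative D) (at t within S)"
    if "(f has_real_derivative D) (at (t + 2))" for f D
    using that DERIV_shift[of f D t 2] by (simp add: has_field_derivative_at_within)
  have "((\<lambda>s. c * s * (s + 4) / 4) has_real_derivative c * (s + 2) / 2) (at s)" for s :: real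
    by (auto intro!: derivative_eq_intros simp: field_simps)
  from shift[OF this] show "((\<lambda>t. gap_weight c (t + 2)) has_real_derivative c * (t + 4) / 2) (at t within S)"
    unfolding gap_weight_def by (rule DERIV_cong) simp
  have "((\<lambda>s. (s + 3) / (2 * s)) has_real_derivative - 3 / (2 * s\<^sup>2)) (at s)" if "s > 0" for s :: real
    using that by (auto intro!: derivative_eq_intros simp: field_simps power2_eq_square)
  from shift[OF this[OF assms]]
  show "((\<lambda>t. (t + 2 + 3) / (2 * (t + 2))) has_real_derivative - 3 / (2 * (t + 2)\<^sup>2)) (at t within S)" .
  have "((\<lambda>s. s\<^sup>2 / 8 + 3 * s / 8 - 1 / 4 + 9 / (2 * s)) has_real_derivative
      s / 4 + 3 / 8 - 9 / (2 * s\<^sup>2)) (at s)" if "s > 0" for s :: real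
    using that by (auto intro!: derivative_eq_intros simp: field_simps power2_eq_square)
  from shift[OF this[OF assms]]
  show "((\<lambda>t. (t + 2)\<^sup>2 / 8 + 3 * (t + 2) / 8 - 1 / 4 + 9 / (2 * (t + 2))) has_real_derivative
      (t + 2) / 4 + 3 / 8 - 9 / (2 * (t + 2)\<^sup>2)) (at t within S)" .
  show "(betabar has_real_derivative 3 / (t + 2)\<^sup>2) (at t within S)"
    unfolding betabar_def[abs_def] using assms
    by (auto intro!: derivative_eq_intros simp: field_simps power2_eq_square)
qed

locale accelerated_flow = smooth_convex_objective +
  fixes c :: real and J :: "real set" and z v :: "real \<Rightarrow> 'a::real_inner"
  assumes c_pos: "c > 0"
    and is_interval_J: "is_interval J" and zero_in_J: "0 \<in> J"
    and J_nonneg: "\<And>t. t \<in> J \<Longrightarrow> 0 \<le> t"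
    and z_deriv: "\<And>t. t \<in> J \<Longrightarrow> (z has_vector_derivative v t) (at t within J)"
    and v_deriv: "\<And>t. t \<in> J \<Longrightarrow> (v has_vector_derivative
          - (2 * dbar t) *\<^sub>R v t - c *\<^sub>R gradL (z t + betabar t *\<^sub>R v t)) (at t within J)"
begin

definition extrapolated :: "real \<Rightarrow> 'a" where
  "extrapolated t = z t + betabar t *\<^sub>R v t"

definition energy_rate :: "real \<Rightarrow> real" where
  "energy_rate t =
     - c * gap_weight c (t + 2) * betabar t * (gradL (extrapolated t) \<bullet> gradL (extrapolated t))
     - c * (t + 4) / 2 * (gradL (extrapolated t) \<bullet> (extrapolated t - zstar)
                          - (L (extrapolated t) - L zstar))
     - 3 / (2 * (t + 2)\<^sup>2) * ((z t - zstar) \<bullet> (z t - zstar))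
     - (7 / 8 - 3 / (2 * (t + 2)) + 63 / (2 * (t + 2)\<^sup>2)) * (v t \<bullet> v t)"

lemma v_has_derivative:
  assumes "t \<in> J"
  shows "(v has_vector_derivative - (3 / (t + 2)) *\<^sub>R v t - c *\<^sub>R gradL (extrapolated t)) (at t within J)"
proof -
  have "2 * dbar t = 3 / (t + 2)" using J_nonneg[OF assms] by (simp add: dbar_def field_simps)
  then show ?thesis using v_deriv[OF assms] by (simp add: extrapolated_def)
qed

lemma gap_has_derivative:
  assumes "t \<in> J"
  shows "((\<lambda>t. L (extrapolated t) - L zstar) has_real_derivative
      (1 + 3 / (t + 2)\<^sup>2) * (gradL (extrapolated t) \<bullet> v t)
      + betabar t * (- 3 / (t + 2) * (gradL (extrapolated t) \<bullet> v t)
                     - c * (gradL (extrapolated t) \<bullet> gradL (extrapolated t)))) (at t within J)"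
proof -
  have "(extrapolated has_vector_derivative v t + (3 / (t + 2)\<^sup>2) *\<^sub>R v t
      + betabar t *\<^sub>R (- (3 / (t + 2)) *\<^sub>R v t - c *\<^sub>R gradL (extrapolated t))) (at t within J)"
    using energy_weights_has_derivative(4)[of t J] J_nonneg[OF assms] z_deriv[OF assms] v_has_derivative[OF assms]
    unfolding extrapolated_def[abs_def]
    by (auto intro!: derivative_eq_intros simp: has_real_derivative_iff_has_vector_derivative algebra_simps)
  from has_derivative_compose[OF this[unfolded has_vector_derivative_def] has_derivative_L]
  have "((\<lambda>t. L (extrapolated t)) has_real_derivative gradL (extrapolated t) \<bullet> (v t
      + (3 / (t + 2)\<^sup>2) *\<^sub>R v t + betabar t *\<^sub>R (- (3 / (t + 2)) *\<^sub>R v t - c *\<^sub>R gradL (extrapolated t))))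
      (at t within J)"
    unfolding has_field_derivative_def by (rule has_derivative_eq_rhs) (simp add: fun_eq_iff algebra_simps)
  from DERIV_diff[OF this DERIV_const[of "L zstar"]] show ?thesis
    by (simp add: inner_add_right inner_diff_right algebra_simps)
qed

lemma energy_has_derivative:
  assumes "t \<in> J"
  shows "((\<lambda>t. energy L zstar c t (z t) (v t)) has_real_derivative energy_rate t) (at t within J)"
proof -
  define s where "s = t + 2"
  have s: "s > 0" using J_nonneg[OF assms] by (simp add: s_def)
  define p where "p = z t - zstar"
  define g where "g = gradL (extrapolated t)"
  have dz: "((\<lambda>t. z t - zstar) has_vector_derivative v t) (at t within J)"
    using z_deriv[OF assms] by (auto intro!: derivative_eq_intros)
  note dv = v_has_derivative[OF assms]
  note weights = energy_weights_has_derivative[OF s[unfolded s_def], where S = J]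
  have dB2: "((\<lambda>t. (t + 2 + 2) / 2) has_real_derivative 1 / 2) (at t within J)"
    by (auto intro!: derivative_eq_intros)
  have dP: "((\<lambda>t. (z t - zstar) \<bullet> (z t - zstar)) has_real_derivative 2 * (p \<bullet> v t)) (at t within J)"
    using has_real_derivative_inner[OF dz dz] by (simp add: p_def inner_commute)
  have dX: "((\<lambda>t. (z t - zstar) \<bullet> v t) has_real_derivative
      v t \<bullet> v t + (- 3 / s * (p \<bullet> v t) - c * (g \<bullet> p))) (at t within J)"
    using has_real_derivative_inner[OF dz dv]
    by (simp add: p_def g_def s_def inner_diff_right inner_commute algebra_simps)
  have dU: "((\<lambda>t. v t \<bullet> v t) has_real_derivative 2 * (- 3 / s * (v t \<bullet> v t) - c * (g \<bullet> v t)))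
      (at t within J)"
    using has_real_derivative_inner[OF dv dv]
    by (simp add: g_def s_def inner_diff_left inner_diff_right inner_commute algebra_simps)
  have \<beta>: "betabar t = 1 - 3 / s" using s by (simp add: betabar_def s_def field_simps)
  have gy: "g \<bullet> (extrapolated t - zstar) = g \<bullet> p + betabar t * (g \<bullet> v t)"
    by (simp add: extrapolated_def p_def inner_diff_right inner_add_right algebra_simps)
  have t4: "t + 4 = s + 2" by (simp add: s_def)
  show ?thesis
    unfolding energy_def energy_form_def extrapolated_def[symmetric]
    apply (rule DERIV_cong)
     apply (rule weights gap_has_derivative[OF assms] dB2 dP dX dU DERIV_add DERIV_mult)+
    unfolding energy_rate_def g_def[symmetric] gy p_def[symmetric] s_def[symmetric] t4
    using s by (simp add: \<beta> gap_weight_def field_simps power2_eq_square)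
qed

lemma energy_rate_le:
  assumes "t \<in> J"
  shows "energy_rate t \<le> - c * gap_weight c (t + 2) * betabar t * (gradL (extrapolated t) \<bullet> gradL (extrapolated t))"
proof -
  have t: "t \<ge> 0" using J_nonneg[OF assms] .
  have "L (extrapolated t) + gradL (extrapolated t) \<bullet> (zstar - extrapolated t) \<le> L zstar"
    by (rule convex_gradient_inequality[OF has_derivative_L convex_L])
  then have "0 \<le> gradL (extrapolated t) \<bullet> (extrapolated t - zstar) - (L (extrapolated t) - L zstar)"
    by (simp add: inner_diff_right)
  then have "0 \<le> c * (t + 4) / 2 * (gradL (extrapolated t) \<bullet> (extrapolated t - zstar)
      - (L (extrapolated t) - L zstar))"
    using t c_pos by simp
  moreover have "0 \<le> 3 / (2 * (t + 2)\<^sup>2) * ((z t - zstar) \<bullet> (z t - zstar))"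
    by simp
  moreover have "0 \<le> (7 / 8 - 3 / (2 * (t + 2)) + 63 / (2 * (t + 2)\<^sup>2)) * (v t \<bullet> v t)"
  proof -
    have "3 / (2 * (t + 2)) \<le> 3 / 4" using t by (simp add: field_simps)
    moreover have "0 \<le> 63 / (2 * (t + 2)\<^sup>2)" by simp
    ultimately show ?thesis by simp
  qed
  ultimately show ?thesis unfolding energy_rate_def by linarith
qed
lemma energy_rate_nonpos:
  assumes "t \<in> J" and "1 \<le> t"
  shows "energy_rate t \<le> 0"
proof -
  have "0 \<le> c * gap_weight c (t + 2) * betabar t * (gradL (extrapolated t) \<bullet> gradL (extrapolated t))"
    using assms c_pos by (simp add: gap_weight_def betabar_def)
  with energy_rate_le[OF assms(1)] show ?thesis by linarith
qed

lemma energy_rate_le_energy: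
  assumes "t \<in> J"
  shows "energy_rate t \<le> c * M * energy L zstar c t (z t) (v t)"
proof -
  have t: "t \<ge> 0" using J_nonneg[OF assms] .
  define A where "A = gap_weight c (t + 2)"
  define N where "N = gradL (extrapolated t) \<bullet> gradL (extrapolated t)"
  define F where "F = L (extrapolated t) - L zstar"
  have A: "A \<ge> 0" using t c_pos by (simp add: A_def gap_weight_def)
  have "- betabar t \<le> 1 / 2" using t by (simp add: betabar_def field_simps)
  have "- c * A * betabar t * N = c * A * N * (- betabar t)" by simp
  also have "\<dots> \<le> c * A * N * (1 / 2)"
    using \<open>- betabar t \<le> 1 / 2\<close> A c_pos by (intro mult_left_mono) (simp_all add: N_def)
  also have "\<dots> \<le> c * A * (2 * M * F) * (1 / 2)"
    using gradient_norm_le_suboptimality[OF has_derivative_L lipschitz_gradL M_pos minimal]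
      A c_pos by (intro mult_right_mono mult_left_mono) (simp_all add: N_def F_def)
  also have "\<dots> = c * M * (A * F)" by simp
  also have "\<dots> \<le> c * M * energy L zstar c t (z t) (v t)"
  proof -
    have "0 \<le> (t + 2) / 10 * (v t \<bullet> v t)" using t by simp
    then have "A * F \<le> energy L zstar c t (z t) (v t)"
      using energy_ge[of c t "z t" "v t"] t c_pos unfolding A_def F_def extrapolated_def by linarith
    then show ?thesis using c_pos M_pos by simp
  qed
  finally show ?thesis using energy_rate_le[OF assms] by (simp add: A_def N_def)
qed

lemma energy_le_initial:
  assumes "T \<in> J" and "1 \<le> T"
  shows "energy L zstar c T (z T) (v T) \<le> exp (c * M) * energy L zstar c 0 (z 0) (v 0)"
proof -
  let ?E = "\<lambda>t. energy L zstar c t (z t) (v t)"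
  have sub: "{0..T} \<subseteq> J"
    using mem_is_interval_1_I[OF is_interval_J zero_in_J assms(1)] by auto
  have deriv: "(?E has_real_derivative energy_rate x) (at x within {a..b})"
    if "x \<in> {a..b}" and "{a..b} \<subseteq> {0..T}" for x a b
    using that sub by (intro DERIV_subset[OF energy_has_derivative]) auto
  have "?E 1 \<le> exp (c * M * (1 - 0)) * ?E 0"
  proof (rule DERIV_le_linear_imp_exp_bound[where f = ?E])
    fix x :: real assume x: "x \<in> {0..1}"
    show "(?E has_real_derivative energy_rate x) (at x within {0..1})"
      using x assms(2) by (intro deriv) auto
    show "energy_rate x \<le> c * M * ?E x"
      using x assms(2) sub by (intro energy_rate_le_energy) auto
  qed simp
  moreover have "?E T \<le> ?E 1"
  proof (rule DERIV_nonpos_imp_decreasing_within[where f = ?E])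
    fix x :: real assume x: "x \<in> {1..T}"
    show "(?E has_real_derivative energy_rate x) (at x within {1..T})"
      using x by (intro deriv) auto
    show "energy_rate x \<le> 0"
      using x sub by (intro energy_rate_nonpos) auto
  qed (fact assms(2))
  ultimately show ?thesis by simp
qed
lemma suboptimality_bound:
  assumes "t \<in> J" and "1 \<le> t"
  shows "c * (L (z t) - L zstar)
    \<le> (4 + 4 * M + 5 * c + 5 * c * M) * exp (c * M) * energy L zstar c 0 (z 0) (v 0) / (t + 2)"
proof -
  have "0 \<le> 4 + 4 * M + 5 * c + 5 * c * M" using M_pos c_pos by simp
  with energy_le_initial[OF assms] have "(4 + 4 * M + 5 * c + 5 * c * M) * energy L zstar c t (z t) (v t)
      \<le> (4 + 4 * M + 5 * c + 5 * c * M) * exp (c * M) * energy L zstar c 0 (z 0) (v 0)"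
    by (simp add: mult_left_mono mult.assoc)
  with suboptimality_le_energy[OF c_pos assms(2), of "z t" "v t"] assms(2) show ?thesis
    by (smt (verit) divide_right_mono)
qed

end

lemma (in smooth_convex_objective) suboptimality_uniformly_eventually_le:
  assumes "c > 0" and "\<epsilon> > 0" and "compact K"
  shows "\<exists>tstar>0. \<forall>J z v. accelerated_flow L gradL M zstar c J z v \<and> (z 0, v 0) \<in> K \<longrightarrow>
           (\<forall>t\<in>J. tstar \<le> t \<longrightarrow> c * (L (z t) - L zstar) \<le> \<epsilon>)"
proof -
  have "continuous_on UNIV L"
    using has_derivative_L has_derivative_continuous continuous_at_imp_continuous_on by blast
  then have "continuous_on K (\<lambda>(x, w). energy L zstar c 0 x w)"
    unfolding energy_def energy_form_def case_prod_unfold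
    by (intro continuous_intros continuous_on_compose2[OF \<open>continuous_on UNIV L\<close>]) auto
  then have "bounded ((\<lambda>(x, w). energy L zstar c 0 x w) ` K)"
    using \<open>compact K\<close> by (intro compact_imp_bounded compact_continuous_image)
  then obtain B0 where B0: "\<forall>y \<in> (\<lambda>(x, w). energy L zstar c 0 x w) ` K. \<bar>y\<bar> \<le> B0"
    unfolding bounded_real by blast
  define B where "B = max B0 0"
  have B: "energy L zstar c 0 x w \<le> B" if "(x, w) \<in> K" for x w
    using B0 that unfolding B_def by force
  have "B \<ge> 0" by (simp add: B_def)
  define C where "C = (4 + 4 * M + 5 * c + 5 * c * M) * exp (c * M)"
  have "C \<ge> 0" using M_pos \<open>c > 0\<close> by (simp add: C_def)
  define tstar where "tstar = max 1 (C * B / \<epsilon>)"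
  show ?thesis
  proof (intro exI[of _ tstar] conjI allI impI ballI)
    show "tstar > 0" by (simp add: tstar_def)
    fix J z v t
    assume flow: "accelerated_flow L gradL M zstar c J z v \<and> (z 0, v 0) \<in> K"
      and "t \<in> J" and "tstar \<le> t"
    then interpret accelerated_flow L gradL M zstar c J z v by simp
    have "1 \<le> t" using \<open>tstar \<le> t\<close> by (simp add: tstar_def)
    have "c * (L (z t) - L zstar) \<le> C * energy L zstar c 0 (z 0) (v 0) / (t + 2)"
      using suboptimality_bound[OF \<open>t \<in> J\<close> \<open>1 \<le> t\<close>] by (simp add: C_def)
    also have "\<dots> \<le> C * B / t"
      using B[of "z 0" "v 0"] flow \<open>C \<ge> 0\<close> \<open>B \<ge> 0\<close> \<open>1 \<le> t\<close>
      by (intro frac_le mult_left_mono) auto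
    also have "\<dots> \<le> \<epsilon>"
      using \<open>tstar \<le> t\<close> \<open>1 \<le> t\<close> \<open>\<epsilon> > 0\<close> by (simp add: tstar_def field_simps)
    finally show "c * (L (z t) - L zstar) \<le> \<epsilon>" .
  qed
qed

lemma solution_is_accelerated_flow:
  fixes L :: "real^'n \<Rightarrow> real"
  assumes "smooth_convex_objective L gradL M zstar" and "zeta > 0"
    and sol: "is_solution zeta M gradL J z1 z2 tau" and "tau 0 = 0"
  shows "accelerated_flow L gradL M zstar (zeta\<^sup>2 / M) J z1 z2"
proof -
  interpret smooth_convex_objective L gradL M zstar by fact
  have J: "is_interval J" "0 \<in> J" using sol by (simp_all add: is_solution_def)
  have tau: "tau t = t" if "t \<in> J" for t
  proof -
    have "((\<lambda>t. tau t - t) has_real_derivative 0) (at x within J)" if "x \<in> J" for x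
      using sol that unfolding is_solution_def has_real_derivative_iff_has_vector_derivative[symmetric]
      by (auto intro!: derivative_eq_intros)
    then obtain k where "\<forall>x\<in>J. tau x - x = k"
      using has_field_derivative_zero_constant[OF is_interval_convex[OF J(1)]] by blast
    then have "tau 0 - 0 = k" and "tau t - t = k" using J(2) that by auto
    with \<open>tau 0 = 0\<close> show ?thesis by simp
  qed
  show ?thesis
    unfolding accelerated_flow_def accelerated_flow_axioms_def
  proof (intro conjI ballI allI impI)
    show "0 < zeta\<^sup>2 / M" using \<open>zeta > 0\<close> M_pos by simp
    fix t assume "t \<in> J"
    with sol tau show "0 \<le> t" and "(z1 has_vector_derivative z2 t) (at t within J)"
      and "(z2 has_vector_derivative - (2 * dbar t) *\<^sub>R z2 t
             - (zeta\<^sup>2 / M) *\<^sub>R gradL (z1 t + betabar t *\<^sub>R z2 t)) (at t within J)"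
      unfolding is_solution_def by force+
  qed (use assms(1) J in auto)
qed

theorem proposition5p6:
  fixes L :: "real^'n \<Rightarrow> real"
    and gradL :: "real^'n \<Rightarrow> real^'n"
    and M zeta :: real
    and zstar :: "real^'n"
  assumes grad: "\<And>x. (L has_derivative (\<lambda>h. gradL x \<bullet> h)) (at x)"
    and C1: "continuous_on UNIV gradL"
    and conv: "convex_on UNIV L"
    and minimizer: "\<forall>y. L zstar \<le> L y"
    and unique: "\<And>z. (\<forall>y. L z \<le> L y) \<Longrightarrow> z = zstar"
    and Mpos: "M > 0"
    and lip: "\<And>x y. norm (gradL x - gradL y) \<le> M * norm (x - y)"
    and zeta_pos: "zeta > 0"
  shows "\<forall>\<epsilon>>0. \<forall>K :: ((real^'n) \<times> (real^'n)) set. compact K \<longrightarrow>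
           (\<exists>tstar>0. \<forall>J z1 z2 tau.
              is_maximal_solution zeta M gradL J z1 z2 tau \<and>
              (z1 0, z2 0) \<in> K \<and> tau 0 = 0 \<longrightarrow>
              (\<forall>t\<in>J. t \<ge> tstar \<longrightarrow> (zeta\<^sup>2 / M) * (L (z1 t) - L zstar) \<le> \<epsilon>))"
proof (intro allI impI)
  fix \<epsilon> :: real and K :: "((real^'n) \<times> (real^'n)) set"
  assume "\<epsilon> > 0" and "compact K"
  have objective: "smooth_convex_objective L gradL M zstar"
    using grad conv minimizer Mpos lip by unfold_locales auto
  have "zeta\<^sup>2 / M > 0" using zeta_pos Mpos by simp
  from smooth_convex_objective.suboptimality_uniformly_eventually_le
    [OF objective this \<open>\<epsilon> > 0\<close> \<open>compact K\<close>]
  obtain tstar where "tstar > 0" and bound: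
    "\<forall>J z v. accelerated_flow L gradL M zstar (zeta\<^sup>2 / M) J z v \<and> (z 0, v 0) \<in> K \<longrightarrow>
       (\<forall>t\<in>J. tstar \<le> t \<longrightarrow> zeta\<^sup>2 / M * (L (z t) - L zstar) \<le> \<epsilon>)"
    by blast
  show "\<exists>tstar>0. \<forall>J z1 z2 tau. is_maximal_solution zeta M gradL J z1 z2 tau \<and>
      (z1 0, z2 0) \<in> K \<and> tau 0 = 0 \<longrightarrow>
      (\<forall>t\<in>J. t \<ge> tstar \<longrightarrow> (zeta\<^sup>2 / M) * (L (z1 t) - L zstar) \<le> \<epsilon>)"
  proof (intro exI[of _ tstar] conjI allI impI)
    fix J z1 z2 tau
    assume "is_maximal_solution zeta M gradL J z1 z2 tau \<and> (z1 0, z2 0) \<in> K \<and> tau 0 = 0"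
    with solution_is_accelerated_flow[OF objective zeta_pos, of J z1 z2 tau] bound
    show "\<forall>t\<in>J. t \<ge> tstar \<longrightarrow> (zeta\<^sup>2 / M) * (L (z1 t) - L zstar) \<le> \<epsilon>"
      unfolding is_maximal_solution_def by blast
  qed fact
qed

end
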